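(* Let $\mathcal K$ (UAVs) and $\mathcal I$ (subscribers) be finite sets. Fix $H>0$, $\sigma^2>0$, $\omega_{ij}>0$, transmit powers $p_j\ge 0$, subscriber positions $s_i\in\mathbb R^2$, previous UAV positions $\bar q_k\in\mathbb R^2$, association indicators $c_{ik}\in\{0,1\}$ with $\sum_kc_{ik}\le1$, $\sum_ic_{ik}\le 1$, constants $L>0$, $B>0$, $V\rho_1\ge0$, nonnegative weights $a_i$, and positive constants $R_{\rm cov}$, $d_{\min}$, $s_{\max}$. For UAV positions $q=(q_k)_{k\in\mathcal K}$, $q_k\in\mathbb R^2$, let $h_{ij}(q)=\omega_{ij}/(H^2+\|q_j-s_i\|^2)$ and $r_i(q)=\sum_kc_{ik}\log_2\big(1+\frac{p_kh_{ik}(q)}{\sigma^2+\sum_{j\ne k}p_jh_{ij}(q)}\big)$. Problem (T): maximize $\Psi(q)=\sum_ia_ir_i(q)-V\rho_1\sum_i\frac{L}{B\,r_i(q)}$ (with $L/(B\cdot0)=+\infty$) subject to $\|q_k-s_i\|\le R_{\rm cov}$ for all $i,k$; $\|q_k-q_j\|^2\ge d_{\min}^2$ for all $k\ne j$; $\|q_k-\bar q_k\|^2\le s_{\max}^2$ for all $k$. Let $\mathrm{OPT}_T$ be the supremum of $\Psi$ over this feasible set. Fix a local point $q^{(r)}$ and define $d^{(r)}_{ij}=H^2+\|q^{(r)}_j-s_i\|^2$, $D^{(r)}_i=\log_2(\sigma^2+\sum_jp_j\omega_{ij}/d^{(r)}_{ij})$, $E^{(r)}_{ij}=p_j\omega_{ij}/\big((d^{(r)}_{ij})^2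 2^{D^{(r)}_i}\ln2\big)$, $\tilde\Lambda_{ik}(b)=-\log_2(\sigma^2+\sum_{j\ne k}p_j\omega_{ij}/(H^2+b_{ij}))$. Problem (C): maximize $\sum_ia_i\eta_i-V\rho_1\sum_i\xi_i$ over $q$, $\eta=(\eta_i)$, $\xi=(\xi_i)$, $b=(b_{ij})$ with $b_{ij}>-H^2$, subject to: $\xi_i\ge0$, $\eta_i\ge0$, $\xi_i\eta_i\ge L/B$ for all $i$; for all $i$, $\sum_kc_{ik}\big(D^{(r)}_i-\sum_jE^{(r)}_{ij}(\|q_j-s_i\|^2-\|q^{(r)}_j-s_i\|^2)\big)+\sum_kc_{ik}\tilde\Lambda_{ik}(b)\ge\eta_i$; for all $i,j$: $-\|q^{(r)}_j-s_i\|^2+2(q^{(r)}_j-s_i)^{\rm T}(q_j-s_i)\ge b_{ij}$; for all $k\ne j$: $-\|q^{(r)}_k-q^{(r)}_j\|^2+2(q^{(r)}_k-q^{(r)}_j)^{\rm T}(q_k-q_j)\ge d_{\min}^2$; $\|q_k-s_i\|\le R_{\rm cov}$ for all $i,k$; $\|q_k-\bar q_k\|\le s_{\max}$ for all $k$. Let $\mathrm{OPT}_C$ be the supremum of the objective of (C) ($-\infty$ if infeasible). Then $\mathrm{OPT}_C\le\mathrm{OPT}_T$, i.e., the optimal value of (C) is a lower bound on the optimal value of (T).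
   Context: Problem (T) is the per-slot UAV trajectory subproblem of a Lyapunov drift-plus-penalty scheme for multi-UAV video delivery, with fixed association and fixed powers: UAVs fly at common altitude $H$, $q_k$ is UAV $k$'s horizontal position in the current slot and $\bar q_k$ in the previous slot, $R_{\rm cov}$ is the line-of-sight coverage radius (written $H\tan^{-1}\theta$ in the paper), $d_{\min}$ the minimum inter-UAV safety distance, $s_{\max}$ the maximum per-slot flight distance. In the paper $a_i=[X_i(t)]^++[Z_i(t)]^+$ (virtual queue backlogs, $[x]^+=\max\{x,0\}$), $L$ is video data length per slot and $B$ the bandwidth. *)

theory Defs
  imports "HOL-Analysis.Analysis" "HOL-Library.Extended_Real"
begin

definition chan :: "real \<Rightarrow> ('i \<Rightarrow> 'k \<Rightarrow> real) \<Rightarrow> ('i \<Rightarrow> real^2) \<Rightarrow> ('k \<Rightarrow> real^2) \<Rightarrow> 'i \<Rightarrow> 'k \<Rightarrow> real"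
  where "chan H omega s q i j = omega i j / (H^2 + (norm (q j - s i))^2)"

definition rate :: "'k set \<Rightarrow> real \<Rightarrow> real \<Rightarrow> ('i \<Rightarrow> 'k \<Rightarrow> real) \<Rightarrow> ('k \<Rightarrow> real)
    \<Rightarrow> ('i \<Rightarrow> real^2) \<Rightarrow> ('i \<Rightarrow> 'k \<Rightarrow> real) \<Rightarrow> ('k \<Rightarrow> real^2) \<Rightarrow> 'i \<Rightarrow> real"
  where "rate K H sigma2 omega p s c q i =
    (\<Sum>k\<in>K. c i k * log 2 (1 + p k * chan H omega s q i k /
        (sigma2 + (\<Sum>j\<in>K - {k}. p j * chan H omega s q i j))))"

definition Psi :: "'k set \<Rightarrow> 'i set \<Rightarrow> real \<Rightarrow> real \<Rightarrow> ('i \<Rightarrow> 'k \<Rightarrow> real) \<Rightarrow> ('k \<Rightarrow> real)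
    \<Rightarrow> ('i \<Rightarrow> real^2) \<Rightarrow> ('i \<Rightarrow> 'k \<Rightarrow> real) \<Rightarrow> ('i \<Rightarrow> real) \<Rightarrow> real \<Rightarrow> real \<Rightarrow> real
    \<Rightarrow> ('k \<Rightarrow> real^2) \<Rightarrow> ereal"
  where "Psi K I H sigma2 omega p s c a L B Vrho1 q =
    ereal (\<Sum>i\<in>I. a i * rate K H sigma2 omega p s c q i)
    - ereal Vrho1 * (\<Sum>i\<in>I. (if rate K H sigma2 omega p s c q i = 0 then \<infinity>
                            else ereal (L / (B * rate K H sigma2 omega p s c q i))))"

definition feasT :: "'k set \<Rightarrow> 'i set \<Rightarrow> ('i \<Rightarrow> real^2) \<Rightarrow> ('k \<Rightarrow> real^2) \<Rightarrow> real \<Rightarrow> real \<Rightarrow> real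
    \<Rightarrow> ('k \<Rightarrow> real^2) set"
  where "feasT K I s qbar Rcov dmin smax =
    {q. (\<forall>i\<in>I. \<forall>k\<in>K. norm (q k - s i) \<le> Rcov)
      \<and> (\<forall>k\<in>K. \<forall>j\<in>K. k \<noteq> j \<longrightarrow> (norm (q k - q j))^2 \<ge> dmin^2)
      \<and> (\<forall>k\<in>K. (norm (q k - qbar k))^2 \<le> smax^2)}"

definition OPT_T where
  "OPT_T K I H sigma2 omega p s c a L B Vrho1 qbar Rcov dmin smax =
    Sup (Psi K I H sigma2 omega p s c a L B Vrho1 ` feasT K I s qbar Rcov dmin smax)"

definition dr :: "real \<Rightarrow> ('i \<Rightarrow> real^2) \<Rightarrow> ('k \<Rightarrow> real^2) \<Rightarrow> 'i \<Rightarrow> 'k \<Rightarrow> real"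
  where "dr H s qr i j = H^2 + (norm (qr j - s i))^2"

definition Dr :: "'k set \<Rightarrow> real \<Rightarrow> real \<Rightarrow> ('i \<Rightarrow> 'k \<Rightarrow> real) \<Rightarrow> ('k \<Rightarrow> real)
    \<Rightarrow> ('i \<Rightarrow> real^2) \<Rightarrow> ('k \<Rightarrow> real^2) \<Rightarrow> 'i \<Rightarrow> real"
  where "Dr K H sigma2 omega p s qr i =
    log 2 (sigma2 + (\<Sum>j\<in>K. p j * omega i j / dr H s qr i j))"

definition Er :: "'k set \<Rightarrow> real \<Rightarrow> real \<Rightarrow> ('i \<Rightarrow> 'k \<Rightarrow> real) \<Rightarrow> ('k \<Rightarrow> real)
    \<Rightarrow> ('i \<Rightarrow> real^2) \<Rightarrow> ('k \<Rightarrow> real^2) \<Rightarrow> 'i \<Rightarrow> 'k \<Rightarrow> real"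
  where "Er K H sigma2 omega p s qr i j =
    p j * omega i j / ((dr H s qr i j)^2 * 2 powr (Dr K H sigma2 omega p s qr i) * ln 2)"

definition Lam :: "'k set \<Rightarrow> real \<Rightarrow> real \<Rightarrow> ('i \<Rightarrow> 'k \<Rightarrow> real) \<Rightarrow> ('k \<Rightarrow> real)
    \<Rightarrow> ('i \<Rightarrow> 'k \<Rightarrow> real) \<Rightarrow> 'i \<Rightarrow> 'k \<Rightarrow> real"
  where "Lam K H sigma2 omega p b i k =
    - log 2 (sigma2 + (\<Sum>j\<in>K - {k}. p j * omega i j / (H^2 + b i j)))"

definition feasC :: "'k set \<Rightarrow> 'i set \<Rightarrow> real \<Rightarrow> real \<Rightarrow> ('i \<Rightarrow> 'k \<Rightarrow> real) \<Rightarrow> ('k \<Rightarrow> real)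
    \<Rightarrow> ('i \<Rightarrow> real^2) \<Rightarrow> ('i \<Rightarrow> 'k \<Rightarrow> real) \<Rightarrow> real \<Rightarrow> real \<Rightarrow> ('k \<Rightarrow> real^2)
    \<Rightarrow> ('k \<Rightarrow> real^2) \<Rightarrow> real \<Rightarrow> real \<Rightarrow> real
    \<Rightarrow> (('k \<Rightarrow> real^2) \<times> ('i \<Rightarrow> real) \<times> ('i \<Rightarrow> real) \<times> ('i \<Rightarrow> 'k \<Rightarrow> real)) set"
  where "feasC K I H sigma2 omega p s c L B qr qbar Rcov dmin smax =
    {(q, eta, xi, b).
        (\<forall>i\<in>I. \<forall>j\<in>K. b i j > - (H^2))
      \<and> (\<forall>i\<in>I. xi i \<ge> 0 \<and> eta i \<ge> 0 \<and> xi i * eta i \<ge> L / B)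
      \<and> (\<forall>i\<in>I. (\<Sum>k\<in>K. c i k * (Dr K H sigma2 omega p s qr i
                 - (\<Sum>j\<in>K. Er K H sigma2 omega p s qr i j *
                       ((norm (q j - s i))^2 - (norm (qr j - s i))^2))))
               + (\<Sum>k\<in>K. c i k * Lam K H sigma2 omega p b i k) \<ge> eta i)
      \<and> (\<forall>i\<in>I. \<forall>j\<in>K. b i j \<le> - ((norm (qr j - s i))^2) + 2 * ((qr j - s i) \<bullet> (q j - s i)))
      \<and> (\<forall>k\<in>K. \<forall>j\<in>K. k \<noteq> j \<longrightarrow>
           dmin^2 \<le> - ((norm (qr k - qr j))^2) + 2 * ((qr k - qr j) \<bullet> (q k - q j)))
      \<and> (\<forall>i\<in>I. \<forall>k\<in>K. norm (q k - s i) \<le> Rcov)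
      \<and> (\<forall>k\<in>K. norm (q k - qbar k) \<le> smax)}"

definition objC :: "'i set \<Rightarrow> ('i \<Rightarrow> real) \<Rightarrow> real
    \<Rightarrow> (('k \<Rightarrow> real^2) \<times> ('i \<Rightarrow> real) \<times> ('i \<Rightarrow> real) \<times> ('i \<Rightarrow> 'k \<Rightarrow> real)) \<Rightarrow> ereal"
  where "objC I a Vrho1 x = (case x of (q, eta, xi, b) \<Rightarrow>
    ereal ((\<Sum>i\<in>I. a i * eta i) - Vrho1 * (\<Sum>i\<in>I. xi i)))"

text \<open>Sup over the empty set of ereal is -infinity (infeasible case).\<close>
definition OPT_C where
  "OPT_C K I H sigma2 omega p s c a L B Vrho1 qr qbar Rcov dmin smax =
    Sup (objC I a Vrho1 ` feasC K I H sigma2 omega p s c L B qr qbar Rcov dmin smax)"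

end

theory Submission
  imports Defs
begin

text \<open>A feasible point (q, \<eta>, \<xi>, b) of (C) yields the feasible point q of (T) with no
  smaller objective.  Each squared distance dominates its tangent at qr, so the linearised
  separation constraint implies the true one and b i j lies below the true squared distance,
  making the \<Lambda>-term a lower bound for minus the log-interference.  The term D - \<Sigma> E (\<dots>) is
  the tangent at qr of x \<mapsto> log 2 (\<sigma> + \<Sigma> j. p j \<omega> i j / (H^2 + x j)), which is convex
  (Cauchy-Schwarz plus ln t \<le> t - 1) and hence lies above its tangent.  So \<eta> i \<le> r i q, hence
  r i q > 0 and \<xi> i \<ge> L / (B r i q), and the objective of (C) is at most \<Psi> q.\<close>

lemma sum_divide_square_le:
  fixes a y d :: "'k \<Rightarrow> real"
  assumes "finite K" "\<sigma> \<ge> 0" "\<forall>j\<in>K. a j \<ge> 0" "\<forall>j\<in>K. y j > 0"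
  shows "(\<sigma> + (\<Sum>j\<in>K. a j / d j))\<^sup>2
         \<le> (\<sigma> + (\<Sum>j\<in>K. a j / y j)) * (\<sigma> + (\<Sum>j\<in>K. a j * y j / (d j)\<^sup>2))"
proof -
  \<comment> \<open>Cauchy-Schwarz over K extended by an index None carrying the constant \<sigma>.\<close>
  let ?J = "insert None (Some ` K)"
  have sum_J: "(\<Sum>z\<in>?J. case_option x0 f z) = x0 + (\<Sum>j\<in>K. f j)"
    for x0 and f :: "'k \<Rightarrow> real"
    using assms(1) by (simp add: sum.reindex)
  define u where "u = case_option (sqrt \<sigma>) (\<lambda>j. sqrt (a j / y j))"
  define v where "v = case_option (sqrt \<sigma>) (\<lambda>j. sqrt (a j * y j) / d j)"
  have "(\<Sum>z\<in>?J. u z * v z) = (\<Sum>z\<in>?J. case_option \<sigma> (\<lambda>j. a j / d j) z)"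
    and "(\<Sum>z\<in>?J. (u z)\<^sup>2) = (\<Sum>z\<in>?J. case_option \<sigma> (\<lambda>j. a j / y j) z)"
    and "(\<Sum>z\<in>?J. (v z)\<^sup>2) = (\<Sum>z\<in>?J. case_option \<sigma> (\<lambda>j. a j * y j / (d j)\<^sup>2) z)"
    using assms by (auto simp: u_def v_def power_divide simp flip: real_sqrt_mult intro!: sum.cong)
  then show ?thesis
    using Cauchy_Schwarz_ineq_sum[of u v ?J] by (simp only: sum_J)
qed

lemma ln_sum_divide_ge_tangent:
  fixes a y d :: "'k \<Rightarrow> real"
  assumes "finite K" "\<sigma> > 0" "\<forall>j\<in>K. a j \<ge> 0" "\<forall>j\<in>K. y j > 0" "\<forall>j\<in>K. d j > 0"
  shows "ln (\<sigma> + (\<Sum>j\<in>K. a j / d j))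
           - (\<Sum>j\<in>K. a j * (y j - d j) / (d j)\<^sup>2) / (\<sigma> + (\<Sum>j\<in>K. a j / d j))
         \<le> ln (\<sigma> + (\<Sum>j\<in>K. a j / y j))"
proof -
  define Sd where "Sd = \<sigma> + (\<Sum>j\<in>K. a j / d j)"
  define Sy where "Sy = \<sigma> + (\<Sum>j\<in>K. a j / y j)"
  define W where "W = \<sigma> + (\<Sum>j\<in>K. a j * y j / (d j)\<^sup>2)"
  have Sd_pos: "Sd > 0" and Sy_pos: "Sy > 0"
    using assms by (auto simp: Sd_def Sy_def intro!: add_pos_nonneg sum_nonneg)
  have W_minus_Sd: "W - Sd = (\<Sum>j\<in>K. a j * (y j - d j) / (d j)\<^sup>2)"
    using assms(5) by (auto simp: W_def Sd_def field_simps power2_eq_square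
        simp flip: sum_subtractf intro!: sum.cong)
  have "Sd / Sy \<le> W / Sd"
    using sum_divide_square_le[OF assms(1) less_imp_le[OF assms(2)] assms(3,4), of d] Sd_pos Sy_pos
    by (simp add: Sd_def Sy_def W_def field_simps power2_eq_square)
  moreover have "ln Sd - ln Sy \<le> Sd / Sy - 1"
    using ln_le_minus_one[of "Sd / Sy"] Sd_pos Sy_pos by (simp add: ln_div)
  moreover have "(W - Sd) / Sd = W / Sd - 1"
    using Sd_pos by (simp add: diff_divide_distrib)
  ultimately have "ln Sd - (W - Sd) / Sd \<le> ln Sy"
    by linarith
  then show ?thesis
    unfolding W_minus_Sd unfolding Sd_def Sy_def .
qed

lemma norm_square_ge_tangent:
  fixes u v :: "'a::real_inner"
  shows "2 * (u \<bullet> v) - (norm u)\<^sup>2 \<le> (norm v)\<^sup>2"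
proof -
  have "0 \<le> (norm (v - u))\<^sup>2" by simp
  also have "\<dots> = (norm v)\<^sup>2 - 2 * (u \<bullet> v) + (norm u)\<^sup>2"
    by (simp add: power2_norm_eq_inner inner_diff_left inner_diff_right inner_commute)
  finally show ?thesis by simp
qed

lemma chan_nonneg: "omega i j \<ge> 0 \<Longrightarrow> chan H omega s q i j \<ge> 0"
  by (simp add: chan_def)

lemma rate_eq_sum_log_diff:
  assumes "finite K" "sigma2 > 0" "\<forall>j\<in>K. p j \<ge> 0" "\<forall>j\<in>K. omega i j \<ge> 0"
  shows "rate K H sigma2 omega p s c q i =
    (\<Sum>k\<in>K. c i k * (log 2 (sigma2 + (\<Sum>j\<in>K. p j * chan H omega s q i j))
                    - log 2 (sigma2 + (\<Sum>j\<in>K - {k}. p j * chan H omega s q i j))))"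
  unfolding rate_def
proof (intro sum.cong refl arg_cong2[where f = "(*)"])
  fix k assume k: "k \<in> K"
  define g where "g j = p j * chan H omega s q i j" for j
  define Sk where "Sk = sigma2 + (\<Sum>j\<in>K - {k}. g j)"
  have g_nonneg: "g j \<ge> 0" if "j \<in> K" for j
    using assms(3,4) that by (simp add: g_def chan_nonneg)
  have Sk_pos: "Sk > 0"
    using assms(2) g_nonneg by (auto simp: Sk_def intro!: add_pos_nonneg sum_nonneg)
  have total: "sigma2 + (\<Sum>j\<in>K. g j) = Sk + g k"
    using sum.remove[OF assms(1) k, of g] by (simp add: Sk_def)
  have "log 2 (1 + g k / Sk) = log 2 ((Sk + g k) / Sk)"
    using Sk_pos by (simp add: field_simps)
  also have "\<dots> = log 2 (Sk + g k) - log 2 Sk"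
    using Sk_pos g_nonneg[OF k] by (simp add: log_divide_pos)
  finally show "log 2 (1 + p k * chan H omega s q i k / (sigma2 + (\<Sum>j\<in>K - {k}. p j * chan H omega s q i j)))
      = log 2 (sigma2 + (\<Sum>j\<in>K. p j * chan H omega s q i j))
        - log 2 (sigma2 + (\<Sum>j\<in>K - {k}. p j * chan H omega s q i j))"
    unfolding total[unfolded g_def] Sk_def[unfolded g_def] g_def .
qed

lemma Lam_le_neg_log_interference:
  assumes "sigma2 > 0" "\<forall>j\<in>K. p j \<ge> 0" "\<forall>j\<in>K. omega i j \<ge> 0"
    and "\<forall>j\<in>K. - (H\<^sup>2) < b i j" "\<forall>j\<in>K. b i j \<le> (norm (q j - s i))\<^sup>2"
  shows "Lam K H sigma2 omega p b i k
         \<le> - log 2 (sigma2 + (\<Sum>j\<in>K - {k}. p j * chan H omega s q i j))"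
proof -
  have "p j * chan H omega s q i j \<le> p j * omega i j / (H\<^sup>2 + b i j)" if j: "j \<in> K" for j
  proof -
    have "0 < H\<^sup>2 + b i j" and "H\<^sup>2 + b i j \<le> H\<^sup>2 + (norm (q j - s i))\<^sup>2"
      using assms(4,5) j by auto
    then show ?thesis
      using assms(2,3) j by (auto simp: chan_def intro!: divide_left_mono)
  qed
  then have "(\<Sum>j\<in>K - {k}. p j * chan H omega s q i j) \<le> (\<Sum>j\<in>K - {k}. p j * omega i j / (H\<^sup>2 + b i j))"
    by (intro sum_mono) auto
  moreover have "0 < sigma2 + (\<Sum>j\<in>K - {k}. p j * chan H omega s q i j)"
    using assms(1-3) by (auto intro!: add_pos_nonneg sum_nonneg mult_nonneg_nonneg chan_nonneg)
  ultimately show ?thesis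
    by (simp add: Lam_def)
qed

lemma surrogate_le_log_total:
  assumes "finite K" "H \<noteq> 0" "sigma2 > 0" "\<forall>j\<in>K. p j \<ge> 0" "\<forall>j\<in>K. omega i j \<ge> 0"
  shows "Dr K H sigma2 omega p s qr i
           - (\<Sum>j\<in>K. Er K H sigma2 omega p s qr i j * ((norm (q j - s i))\<^sup>2 - (norm (qr j - s i))\<^sup>2))
         \<le> log 2 (sigma2 + (\<Sum>j\<in>K. p j * chan H omega s q i j))"
proof -
  define a where "a j = p j * omega i j" for j
  define d where "d j = dr H s qr i j" for j
  define y where "y j = H\<^sup>2 + (norm (q j - s i))\<^sup>2" for j
  define Sd where "Sd = sigma2 + (\<Sum>j\<in>K. a j / d j)"
  have a_nonneg: "\<forall>j\<in>K. a j \<ge> 0"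
    using assms(4,5) by (simp add: a_def)
  have d_pos: "\<forall>j\<in>K. d j > 0" and y_pos: "\<forall>j\<in>K. y j > 0"
    using assms(2) by (auto simp: d_def dr_def y_def add_pos_nonneg)
  have Sd_pos: "Sd > 0"
    using assms(3) a_nonneg d_pos by (auto simp: Sd_def intro!: add_pos_nonneg sum_nonneg)
  have Dr_eq: "Dr K H sigma2 omega p s qr i = ln Sd / ln 2"
    by (simp add: Dr_def Sd_def a_def d_def log_def)
  have "Er K H sigma2 omega p s qr i j * ((norm (q j - s i))\<^sup>2 - (norm (qr j - s i))\<^sup>2)
        = a j * (y j - d j) / (d j)\<^sup>2 / Sd / ln 2" for j
    using Sd_pos by (simp add: Er_def Dr_def flip: Sd_def a_def d_def) (simp add: a_def d_def dr_def y_def)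
  then have Er_sum: "(\<Sum>j\<in>K. Er K H sigma2 omega p s qr i j * ((norm (q j - s i))\<^sup>2 - (norm (qr j - s i))\<^sup>2))
        = (\<Sum>j\<in>K. a j * (y j - d j) / (d j)\<^sup>2) / Sd / ln 2"
    by (simp add: sum_divide_distrib)
  have "ln Sd - (\<Sum>j\<in>K. a j * (y j - d j) / (d j)\<^sup>2) / Sd \<le> ln (sigma2 + (\<Sum>j\<in>K. a j / y j))"
    unfolding Sd_def using ln_sum_divide_ge_tangent[OF assms(1,3) a_nonneg y_pos d_pos] .
  then have "(ln Sd - (\<Sum>j\<in>K. a j * (y j - d j) / (d j)\<^sup>2) / Sd) / ln 2
             \<le> log 2 (sigma2 + (\<Sum>j\<in>K. a j / y j))"
    unfolding log_def by (rule divide_right_mono) simp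
  moreover have "p j * chan H omega s q i j = a j / y j" for j
    by (simp add: chan_def a_def y_def)
  ultimately show ?thesis
    unfolding Dr_eq Er_sum by (simp add: diff_divide_distrib)
qed

lemma rate_ge_of_sca_constraints:
  assumes "finite K" "H \<noteq> 0" "sigma2 > 0" "\<forall>j\<in>K. p j \<ge> 0" "\<forall>j\<in>K. omega i j \<ge> 0"
    and "\<forall>k\<in>K. c i k \<ge> 0" "\<forall>j\<in>K. - (H\<^sup>2) < b i j"
    and "\<forall>j\<in>K. b i j \<le> - ((norm (qr j - s i))\<^sup>2) + 2 * ((qr j - s i) \<bullet> (q j - s i))"
    and "(\<Sum>k\<in>K. c i k * (Dr K H sigma2 omega p s qr i
                 - (\<Sum>j\<in>K. Er K H sigma2 omega p s qr i j *
                       ((norm (q j - s i))\<^sup>2 - (norm (qr j - s i))\<^sup>2))))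
         + (\<Sum>k\<in>K. c i k * Lam K H sigma2 omega p b i k) \<ge> eta"
  shows "eta \<le> rate K H sigma2 omega p s c q i"
proof -
  let ?surrogate = "Dr K H sigma2 omega p s qr i
    - (\<Sum>j\<in>K. Er K H sigma2 omega p s qr i j * ((norm (q j - s i))\<^sup>2 - (norm (qr j - s i))\<^sup>2))"
  let ?total = "log 2 (sigma2 + (\<Sum>j\<in>K. p j * chan H omega s q i j))"
  let ?interference = "\<lambda>k. log 2 (sigma2 + (\<Sum>j\<in>K - {k}. p j * chan H omega s q i j))"
  have b_le: "\<forall>j\<in>K. b i j \<le> (norm (q j - s i))\<^sup>2"
  proof
    fix j assume "j \<in> K"
    then show "b i j \<le> (norm (q j - s i))\<^sup>2"
      using assms(8) norm_square_ge_tangent[of "qr j - s i" "q j - s i"] by force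
  qed
  have Lam_le: "Lam K H sigma2 omega p b i k \<le> - ?interference k" for k
    using assms(3-5,7) b_le by (rule Lam_le_neg_log_interference)
  have surrogate_le: "?surrogate \<le> ?total"
    using assms(1-5) by (rule surrogate_le_log_total)
  have "c i k * (?surrogate + Lam K H sigma2 omega p b i k) \<le> c i k * (?total - ?interference k)"
    if "k \<in> K" for k
  proof (rule mult_left_mono)
    show "?surrogate + Lam K H sigma2 omega p b i k \<le> ?total - ?interference k"
      using Lam_le[of k] surrogate_le by linarith
  qed (use assms(6) that in auto)
  then have "(\<Sum>k\<in>K. c i k * (?surrogate + Lam K H sigma2 omega p b i k))
             \<le> (\<Sum>k\<in>K. c i k * (?total - ?interference k))"
    by (rule sum_mono)
  moreover have "rate K H sigma2 omega p s c q i = (\<Sum>k\<in>K. c i k * (?total - ?interference k))"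
    using assms(1,3-5) by (rule rate_eq_sum_log_diff)
  ultimately show ?thesis
    using assms(9) by (simp add: distrib_left sum.distrib)
qed

lemma feasC_imp_feasT:
  assumes "(q, eta, xi, b) \<in> feasC K I H sigma2 omega p s c L B qr qbar Rcov dmin smax"
  shows "q \<in> feasT K I s qbar Rcov dmin smax"
proof -
  have "dmin\<^sup>2 \<le> (norm (q k - q j))\<^sup>2" if "k \<in> K" "j \<in> K" "k \<noteq> j" for k j
    using assms that norm_square_ge_tangent[of "qr k - qr j" "q k - q j"]
    unfolding feasC_def by force
  moreover have "(norm (q k - qbar k))\<^sup>2 \<le> smax\<^sup>2" if "k \<in> K" for k
    using assms that unfolding feasC_def by (auto intro!: power_mono)
  ultimately show ?thesis
    using assms unfolding feasC_def feasT_def by auto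
qed

lemma objC_le_Psi:
  assumes "finite K" "H \<noteq> 0" "sigma2 > 0" "L > 0" "B > 0" "Vrho1 \<ge> 0"
    and "\<forall>j\<in>K. p j \<ge> 0" "\<forall>i\<in>I. \<forall>j\<in>K. omega i j \<ge> 0"
    and "\<forall>i\<in>I. \<forall>k\<in>K. c i k \<ge> 0" "\<forall>i\<in>I. a i \<ge> 0"
    and feas: "(q, eta, xi, b) \<in> feasC K I H sigma2 omega p s c L B qr qbar Rcov dmin smax"
  shows "objC I a Vrho1 (q, eta, xi, b) \<le> Psi K I H sigma2 omega p s c a L B Vrho1 q"
proof -
  define r where "r i = rate K H sigma2 omega p s c q i" for i
  have eta_le_r: "eta i \<le> r i" if i: "i \<in> I" for i
    unfolding r_def
    using feas i assms(1-3,7-9)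
    by (intro rate_ge_of_sca_constraints[where b = b and qr = qr]) (auto simp: feasC_def)
  have xi_eta: "xi i \<ge> 0" "eta i \<ge> 0" "xi i * eta i \<ge> L / B" if "i \<in> I" for i
    using feas that unfolding feasC_def by auto
  have r_pos: "r i > 0" if i: "i \<in> I" for i
  proof -
    have "eta i \<noteq> 0"
      using xi_eta(3)[OF i] divide_pos_pos[OF assms(4,5)] by auto
    then show ?thesis
      using xi_eta(2)[OF i] eta_le_r[OF i] by linarith
  qed
  have xi_ge: "L / (B * r i) \<le> xi i" if i: "i \<in> I" for i
  proof -
    have "L / B \<le> xi i * eta i"
      using xi_eta(3)[OF i] .
    also have "\<dots> \<le> xi i * r i"
      using xi_eta(1)[OF i] eta_le_r[OF i] by (rule mult_left_mono[rotated])
    finally show ?thesis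
      using r_pos[OF i] assms(5) by (simp add: field_simps)
  qed
  have "(\<Sum>i\<in>I. (if r i = 0 then \<infinity> else ereal (L / (B * r i)))) = (\<Sum>i\<in>I. ereal (L / (B * r i)))"
    using r_pos by (intro sum.cong) force+
  then have Psi_eq: "Psi K I H sigma2 omega p s c a L B Vrho1 q
       = ereal ((\<Sum>i\<in>I. a i * r i) - Vrho1 * (\<Sum>i\<in>I. L / (B * r i)))"
    unfolding Psi_def r_def[symmetric] by simp
  have "(\<Sum>i\<in>I. a i * eta i) \<le> (\<Sum>i\<in>I. a i * r i)"
    using assms(10) eta_le_r by (intro sum_mono mult_left_mono) auto
  moreover have "Vrho1 * (\<Sum>i\<in>I. L / (B * r i)) \<le> Vrho1 * (\<Sum>i\<in>I. xi i)"
    using assms(6) xi_ge by (intro sum_mono mult_left_mono) auto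
  ultimately show ?thesis
    unfolding Psi_eq objC_def by simp
qed

theorem lemma2:
  fixes K :: "'k set" and I :: "'i set"
    and H sigma2 L B Vrho1 Rcov dmin smax :: real
    and omega :: "'i \<Rightarrow> 'k \<Rightarrow> real" and p :: "'k \<Rightarrow> real"
    and s :: "'i \<Rightarrow> real^2" and qbar qr :: "'k \<Rightarrow> real^2"
    and c :: "'i \<Rightarrow> 'k \<Rightarrow> real" and a :: "'i \<Rightarrow> real"
  assumes "finite K" and "finite I"
    and "H > 0" and "sigma2 > 0"
    and "\<forall>i\<in>I. \<forall>j\<in>K. omega i j > 0"
    and "\<forall>j\<in>K. p j \<ge> 0"
    and "\<forall>i\<in>I. \<forall>k\<in>K. c i k \<in> {0, 1}"
    and "\<forall>i\<in>I. (\<Sum>k\<in>K. c i k) \<le> 1"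
    and "\<forall>k\<in>K. (\<Sum>i\<in>I. c i k) \<le> 1"
    and "L > 0" and "B > 0" and "Vrho1 \<ge> 0"
    and "\<forall>i\<in>I. a i \<ge> 0"
    and "Rcov > 0" and "dmin > 0" and "smax > 0"
  shows "OPT_C K I H sigma2 omega p s c a L B Vrho1 qr qbar Rcov dmin smax
         \<le> OPT_T K I H sigma2 omega p s c a L B Vrho1 qbar Rcov dmin smax"
  unfolding OPT_C_def OPT_T_def
proof (rule Sup_mono)
  fix u assume "u \<in> objC I a Vrho1 ` feasC K I H sigma2 omega p s c L B qr qbar Rcov dmin smax"
  then obtain q eta xi b
    where feas: "(q, eta, xi, b) \<in> feasC K I H sigma2 omega p s c L B qr qbar Rcov dmin smax"
      and u: "u = objC I a Vrho1 (q, eta, xi, b)"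
    by auto
  have "\<forall>i\<in>I. \<forall>j\<in>K. omega i j \<ge> 0"
    using assms(5) by (simp add: less_imp_le)
  moreover have "\<forall>i\<in>I. \<forall>k\<in>K. c i k \<ge> 0"
    using assms(7) by force
  ultimately have "u \<le> Psi K I H sigma2 omega p s c a L B Vrho1 q"
    unfolding u using assms(3) objC_le_Psi[OF assms(1) _ assms(4,10,11,12,6) _ _ assms(13) feas] by simp
  with feasC_imp_feasT[OF feas]
  show "\<exists>z\<in>Psi K I H sigma2 omega p s c a L B Vrho1 ` feasT K I s qbar Rcov dmin smax. u \<le> z"
    by blast
qed

end
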